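(* For every $0<\Delta<1/6$, the dithered KLT encoder $f_\Delta$ satisfies $D(f_\Delta)\le\Delta$, i.e. $$E\Big[\int_0^1 \big(X(t) - E[X(t)\mid f_\Delta(X), U_1,\ldots,U_K]\big)^2\,dt\Big]\le \Delta.$$
   Context: Let $U$ be uniformly distributed on $[0,1]$ and let the sawbridge be $X(t) = t-\mathbf{1}(t\ge U)$, $t\in[0,1]$. Let $\phi_k(t)=\sqrt2\sin(\pi k t)$ and $Y_k = \int_0^1 X(t)\phi_k(t)\,dt$ (the Karhunen–Loève coefficients; $E[Y_k^2]=\lambda_k = 1/(\pi^2k^2)$). Let $\gamma>0$ be the unique solution of $\arctan(\pi\sqrt{\gamma}) = \frac{1}{\pi\sqrt{\gamma}}$. Given $\Delta$, set $D = \frac{\Delta^2\pi^2}{4}$, $K = \big\lceil \frac{1}{\pi\sqrt D}\big\rceil$, and $\delta = \frac{\sqrt{12\gamma}}{K}$. Let $U_1,\ldots,U_K$ be i.i.d. uniform on $[-1/2,1/2]$, independent of $U$ (side randomness available to the decoder). The stochastic encoder is $f_\Delta(X) = \big(\lfloor Y_\ell/\delta + U_\ell\rceil\big)_{\ell=1}^K$, where $\lfloor\cdot\rceil$ denotes rounding to the nearest integer. Its distortion $D(f_\Delta)$ is the mean squared error in $L^2[0,1]$ of the best reconstruction of $X$ given $f_\Delta(X)$ and $U_1,\ldots,U_K$. *)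

theory Defs
  imports "HOL-Probability.Probability"
begin

definition sawbridge :: "real \<Rightarrow> real \<Rightarrow> real" where
  "sawbridge u t = t - (if t \<ge> u then 1 else 0)"

definition kl_phi :: "nat \<Rightarrow> real \<Rightarrow> real" where
  "kl_phi k t = sqrt 2 * sin (pi * real k * t)"

definition kl_coeff :: "nat \<Rightarrow> real \<Rightarrow> real" where
  "kl_coeff k u = (LBINT t=0..1. sawbridge u t * kl_phi k t)"

definition gamma_saw :: real where
  "gamma_saw = (THE g. g > 0 \<and> arctan (pi * sqrt g) = 1 / (pi * sqrt g))"

definition D_par :: "real \<Rightarrow> real" where
  "D_par \<Delta> = \<Delta>^2 * pi^2 / 4"

definition K_par :: "real \<Rightarrow> nat" where
  "K_par \<Delta> = nat \<lceil>1 / (pi * sqrt (D_par \<Delta>))\<rceil>"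

definition delta_par :: "real \<Rightarrow> real" where
  "delta_par \<Delta> = sqrt (12 * gamma_saw) / real (K_par \<Delta>)"

(* Encoder output: (round(Y_l/delta + U_l))_{l=1..K}; d is the dither vector (U_1,...,U_K).
   round x = floor (x + 1/2) is rounding to the nearest integer. *)
definition encoder :: "real \<Rightarrow> real \<Rightarrow> (nat \<Rightarrow> real) \<Rightarrow> (nat \<Rightarrow> int)" where
  "encoder \<Delta> u d = restrict (\<lambda>l. round (kl_coeff l u / delta_par \<Delta> + d l)) {1..K_par \<Delta>}"

definition saw_space :: "real \<Rightarrow> (real \<times> (nat \<Rightarrow> real)) measure" where
  "saw_space \<Delta> = uniform_measure lborel {0..1} \<Otimes>\<^sub>M
      (\<Pi>\<^sub>M l\<in>{1..K_par \<Delta>}. uniform_measure lborel {-1/2..1/2})"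

(* Decoders: measurable reconstructions x_hat(t) = g c d t from the code c and the
   dither d (side information at the decoder). *)
definition decoders :: "real \<Rightarrow> ((nat \<Rightarrow> int) \<Rightarrow> (nat \<Rightarrow> real) \<Rightarrow> real \<Rightarrow> real) set" where
  "decoders \<Delta> = {g. (\<lambda>((c, d), t). g c d t) \<in> borel_measurable
      (((\<Pi>\<^sub>M l\<in>{1..K_par \<Delta>}. count_space UNIV) \<Otimes>\<^sub>M (\<Pi>\<^sub>M l\<in>{1..K_par \<Delta>}. lborel)) \<Otimes>\<^sub>M lborel)}"

definition mse :: "real \<Rightarrow> ((nat \<Rightarrow> int) \<Rightarrow> (nat \<Rightarrow> real) \<Rightarrow> real \<Rightarrow> real) \<Rightarrow> ennreal" where
  "mse \<Delta> g = (\<integral>\<^sup>+ \<omega>. (\<integral>\<^sup>+ t\<in>{0..1}.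
      ennreal ((sawbridge (fst \<omega>) t - g (encoder \<Delta> (fst \<omega>) (snd \<omega>)) (snd \<omega>) t)^2) \<partial>lborel)
      \<partial>saw_space \<Delta>)"

definition distortion :: "real \<Rightarrow> ennreal" where
  "distortion \<Delta> = (INF g\<in>decoders \<Delta>. mse \<Delta> g)"

end

theory Submission
  imports Defs
begin

text \<open>
  Decode each of the first \<open>K\<close> Karhunen--Loeve coefficients \<open>Y l\<close> by the linear least-squares
  (Wiener) estimate from its dithered quantisation. With subtractive dither the quantisation
  error is uniform on \<open>[-1/2, 1/2]\<close> whatever the input, so it acts as independent noise of
  variance \<open>\<sigma> = \<delta>\<^sup>2/12 = \<gamma>/K\<^sup>2\<close>. By orthonormality of the basis the expected distortion is the
  truncation error \<open>1/6 - (\<Sum>l\<le>K. \<lambda> l) \<le> 1/(\<pi>\<^sup>2 K)\<close> plus the Wiener errors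
  \<open>\<Sum>l\<le>K. \<lambda> l \<sigma> / (\<lambda> l + \<sigma>)\<close>. The latter is a Riemann sum for \<open>1/(1 + x\<^sup>2)\<close> on
  \<open>[0, \<pi> \<surd>\<gamma>]\<close> scaled by \<open>\<surd>\<gamma> / (\<pi> K)\<close>, so it is at most \<open>\<surd>\<gamma> arctan (\<pi> \<surd>\<gamma>) / (\<pi> K)\<close>,
  which the equation defining \<open>\<gamma>\<close> turns into \<open>1/(\<pi>\<^sup>2 K)\<close>. Hence the distortion is at most
  \<open>2/(\<pi>\<^sup>2 K) \<le> \<Delta>\<close>.
\<close>

section \<open>The constant \<gamma>\<close>

lemma times_arctan_less: "0 < x \<Longrightarrow> x < y \<Longrightarrow> x * arctan x < y * arctan (y::real)"
  by (intro mult_strict_mono) (auto simp: arctan_less_iff)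

lemma ex1_times_arctan_eq_1: "\<exists>!x::real. 0 < x \<and> x * arctan x = 1"
proof (rule ex_ex1I)
  have "\<exists>x\<ge>1. x \<le> 2 \<and> x * arctan x = (1::real)"
  proof (rule IVT)
    show "1 * arctan 1 \<le> (1::real)" using arctan_one pi_less_4 by simp
    have "arctan 1 < arctan (2::real)" by (subst arctan_less_iff) simp
    hence "pi/4 < arctan (2::real)" unfolding arctan_one .
    thus "(1::real) \<le> 2 * arctan 2" using pi_gt3 by linarith
    show "\<forall>x. 1 \<le> x \<and> x \<le> 2 \<longrightarrow> isCont (\<lambda>x. x * arctan x) x"
      by (auto intro!: continuous_intros isCont_arctan)
  qed simp
  then obtain x :: real where "1 \<le> x" "x * arctan x = 1" by blast
  thus "\<exists>x::real. 0 < x \<and> x * arctan x = 1" by (intro exI[of _ x]) simp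
next
  fix x y :: real
  assume "0 < x \<and> x * arctan x = 1" "0 < y \<and> y * arctan y = 1"
  thus "x = y" using times_arctan_less[of x y] times_arctan_less[of y x] by (cases x y rule: linorder_cases) auto
qed

lemma gamma_saw: "gamma_saw > 0" "arctan (pi * sqrt gamma_saw) = 1 / (pi * sqrt gamma_saw)"
proof -
  define P where "P g \<longleftrightarrow> g > 0 \<and> arctan (pi * sqrt g) = 1 / (pi * sqrt g)" for g :: real
  obtain x where x: "0 < x" "x * arctan x = 1" and unique: "\<And>y. 0 < y \<Longrightarrow> y * arctan y = 1 \<Longrightarrow> y = x"
    using ex1_times_arctan_eq_1 by blast
  have char: "P g \<longleftrightarrow> g = (x / pi)^2" for g
  proof
    assume "P g"
    hence "g > 0" "(pi * sqrt g) * arctan (pi * sqrt g) = 1" by (auto simp: P_def field_simps)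
    hence "pi * sqrt g = x" by (intro unique) auto
    thus "g = (x / pi)^2" using \<open>g > 0\<close> by (auto simp: field_simps)
  next
    assume "g = (x / pi)^2"
    hence "pi * sqrt g = x" using x by (simp add: real_sqrt_divide)
    moreover have "g > 0" using x \<open>g = (x / pi)^2\<close> by simp
    moreover have "arctan x = 1 / x" using x by (simp add: eq_divide_eq mult.commute)
    ultimately show "P g" by (simp add: P_def)
  qed
  have "gamma_saw = (x / pi)^2"
    unfolding gamma_saw_def P_def[symmetric] by (rule the_equality) (simp_all add: char)
  hence "P gamma_saw" using char by blast
  thus "gamma_saw > 0" "arctan (pi * sqrt gamma_saw) = 1 / (pi * sqrt gamma_saw)"
    unfolding P_def by blast+
qed

section \<open>Two estimates on sums\<close>

lemma arctan_diff_ge: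
  fixes a b :: real
  assumes "0 \<le> a" "a \<le> b"
  shows "(b - a) / (1 + b^2) \<le> arctan b - arctan a"
proof (cases "a = b")
  case False
  hence ab: "a < b" using assms by simp
  obtain z where z: "a < z" "z < b" "arctan b - arctan a = (b - a) * inverse (1 + z^2)"
    using MVT2[OF ab, of arctan "\<lambda>x. inverse (1 + x^2)"] DERIV_arctan by blast
  have "z^2 \<le> b^2" using z assms by (intro power_mono) auto
  hence "1 / (1 + b^2) \<le> inverse (1 + z^2)"
    by (simp add: inverse_eq_divide frac_le add_pos_nonneg)
  hence "(b - a) * (1 / (1 + b^2)) \<le> (b - a) * inverse (1 + z^2)"
    using ab by (intro mult_left_mono) auto
  thus ?thesis using z by simp
qed simp

lemma sum_arctan_riemann_le:
  fixes c :: real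
  assumes "0 \<le> c"
  shows "(\<Sum>l=1..K. c * real K / ((real K)^2 + c^2 * (real l)^2)) \<le> arctan c"
proof (cases "K = 0")
  case False
  hence K: "real K > 0" by simp
  define f where "f l = arctan (c * real l / real K)" for l :: nat
  have "c * real K / ((real K)^2 + c^2 * (real (Suc i))^2) \<le> f (Suc i) - f i" for i
  proof -
    have "c * real K / ((real K)^2 + c^2 * (real (Suc i))^2)
        = (c * real (Suc i) / real K - c * real i / real K) / (1 + (c * real (Suc i) / real K)^2)"
      using K by (simp add: field_simps power2_eq_square)
    also have "\<dots> \<le> f (Suc i) - f i"
      unfolding f_def using assms K by (intro arctan_diff_ge) (auto intro!: divide_right_mono mult_left_mono)
    finally show ?thesis .
  qed
  hence "(\<Sum>i=0..<K. c * real K / ((real K)^2 + c^2 * (real (Suc i))^2)) \<le> (\<Sum>i=0..<K. f (Suc i) - f i)"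
    by (intro sum_mono)
  also have "\<dots> = arctan c"
    using K by (subst sum_Suc_diff') (simp_all add: f_def)
  finally show ?thesis
    by (simp add: sum.atLeast1_atMost_eq atLeast0LessThan)
qed (simp add: assms)

lemma pi_sq_div_6_le_partial_sum:
  assumes K: "K \<ge> 1"
  shows "pi^2/6 \<le> (\<Sum>l=1..K. 1 / (real l)^2) + 1 / real K"
proof -
  have tail: "(\<Sum>n<N. 1 / (real n + 1)^2) \<le> (\<Sum>n<K. 1 / (real n + 1)^2) + 1 / real K - 1 / real N"
    if "N \<ge> K" for N
    using that
  proof (induction N rule: dec_induct)
    case (step N)
    have N: "real N \<ge> 1" using step K by simp
    have "1 / (real N + 1)^2 \<le> 1 / (real N * (real N + 1))"
      using N by (intro divide_left_mono) (auto simp: power2_eq_square)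
    also have "\<dots> = 1 / real N - 1 / (real N + 1)"
      using N by (simp add: field_simps)
    finally have "1 / (real N + 1)^2 \<le> 1 / real N - 1 / (1 + real N)" by (simp add: add.commute)
    thus ?case using step.IH by simp
  qed simp
  have "(\<lambda>N. \<Sum>n<N. 1 / (real n + 1)^2) \<longlonglongrightarrow> pi^2/6"
    using inverse_squares_sums by (simp add: sums_def add.commute)
  moreover have "(\<lambda>N. (\<Sum>n<K. 1 / (real n + 1)^2) + 1 / real K - 1 / real N)
      \<longlonglongrightarrow> (\<Sum>n<K. 1 / (real n + 1)^2) + 1 / real K - 0"
    by (intro tendsto_intros lim_const_over_n)
  ultimately have "pi^2/6 \<le> (\<Sum>n<K. 1 / (real n + 1)^2) + 1 / real K"
    using tail by (intro LIMSEQ_le) auto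
  also have "(\<Sum>n<K. 1 / (real n + 1)^2) = (\<Sum>l=1..K. 1 / (real l)^2)"
    by (induction K) (auto simp: sum.cl_ivl_Suc add.commute)
  finally show ?thesis .
qed

section \<open>Integrals on intervals\<close>

lemma has_integral_real_derivative:
  fixes F f :: "real \<Rightarrow> real"
  assumes "a \<le> b" "\<And>x. (F has_real_derivative f x) (at x)"
  shows "(f has_integral (F b - F a)) {a..b}"
  using assms(1)
  by (rule fundamental_theorem_of_calculus)
     (use assms(2) in \<open>auto simp: has_real_derivative_iff_has_vector_derivative[symmetric]
                               intro: has_field_derivative_at_within\<close>)

lemma has_integral_split_at:
  fixes F G1 G2 :: "real \<Rightarrow> real"
  assumes "a \<le> u" "u \<le> b"
    and "\<And>t. a \<le> t \<Longrightarrow> t < u \<Longrightarrow> F t = G1 t" "\<And>t. u \<le> t \<Longrightarrow> t \<le> b \<Longrightarrow> F t = G2 t"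
    and "(G1 has_integral I1) {a..u}" "(G2 has_integral I2) {u..b}"
  shows "(F has_integral (I1 + I2)) {a..b}"
proof (rule has_integral_combine[OF assms(1,2)])
  show "(F has_integral I1) {a..u}"
    by (rule has_integral_spike_finite[of "{u}", OF _ _ assms(5)]) (auto intro!: assms(3))
  show "(F has_integral I2) {u..b}"
    by (rule has_integral_spike_finite[of "{}", OF _ _ assms(6)]) (auto intro!: assms(4))
qed

lemma integral_uniform_measure_interval:
  fixes f :: "real \<Rightarrow> real"
  assumes "a < b" and f: "f \<in> borel_measurable borel"
    and bounded: "\<And>x. x \<in> {a..b} \<Longrightarrow> \<bar>f x\<bar> \<le> B" and I: "(f has_integral I) {a..b}"
  shows "integral\<^sup>L (uniform_measure lborel {a..b}) f = I / (b - a)"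
proof -
  have "uniform_measure lborel {a..b} = density lborel (\<lambda>x. ennreal (indicator {a..b} x / (b - a)))"
    using \<open>a < b\<close> unfolding uniform_measure_def
    by (simp add: divide_ennreal ennreal_indicator[symmetric] split: split_indicator)
  hence "integral\<^sup>L (uniform_measure lborel {a..b}) f = (\<integral>x. (indicator {a..b} x / (b - a)) *\<^sub>R f x \<partial>lborel)"
    using \<open>a < b\<close> f by (simp add: integral_density)
  also have "\<dots> = (LINT x:{a..b}|lborel. f x) / (b - a)"
    by (simp add: set_lebesgue_integral_def)
  also have "(LINT x:{a..b}|lborel. f x) = I"
  proof -
    have "set_integrable lborel {a..b} f"
      unfolding set_integrable_def
      by (rule integrableI_bounded_set_indicator[where B=B]) (use \<open>a < b\<close> f bounded in auto)
    thus ?thesis using set_borel_integral_eq_integral(2) I integral_unique by metis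
  qed
  finally show ?thesis .
qed

section \<open>Karhunen--Loeve coefficients of the sawbridge\<close>

definition sawbridge_energy :: "real \<Rightarrow> real" where
  "sawbridge_energy u = (u^3 + (1 - u)^3) / 3"

definition sawbridge_coeff :: "nat \<Rightarrow> real \<Rightarrow> real" where
  "sawbridge_coeff l u = - sqrt 2 * cos (pi * real l * u) / (pi * real l)"

definition kl_eigenvalue :: "nat \<Rightarrow> real" where
  "kl_eigenvalue l = 1 / (pi^2 * (real l)^2)"

definition kl_truncation_error :: "nat \<Rightarrow> real \<Rightarrow> real" where
  "kl_truncation_error K u = sawbridge_energy u - (\<Sum>l\<in>{1..K}. (sawbridge_coeff l u)^2)"

lemma has_integral_sawbridge_sq:
  assumes "0 \<le> u" "u \<le> 1"
  shows "((\<lambda>t. (sawbridge u t)^2) has_integral sawbridge_energy u) {0..1}"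
proof -
  have "((\<lambda>t. t^2) has_integral (u^3/3 - 0^3/3)) {0..u}"
    by (rule has_integral_real_derivative)
       (use assms in \<open>auto intro!: derivative_eq_intros simp: power2_eq_square\<close>)
  moreover have "((\<lambda>t. (t - 1)^2) has_integral ((1-1)^3/3 - (u-1)^3/3)) {u..1}"
    by (rule has_integral_real_derivative)
       (use assms in \<open>auto intro!: derivative_eq_intros simp: power2_eq_square\<close>)
  ultimately have "((\<lambda>t. (sawbridge u t)^2) has_integral (u^3/3 - 0^3/3) + ((1-1)^3/3 - (u-1)^3/3)) {0..1}"
    using assms by (intro has_integral_split_at) (auto simp: sawbridge_def)
  moreover have "(u^3/3 - 0^3/3) + ((1-1)^3/3 - (u-1)^3/3) = sawbridge_energy u"
    unfolding sawbridge_energy_def by (simp add: power3_eq_cube field_simps)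
  ultimately show ?thesis by simp
qed

lemma has_integral_sawbridge_kl_phi:
  assumes "0 \<le> u" "u \<le> 1" "l \<ge> 1"
  shows "((\<lambda>t. sawbridge u t * kl_phi l t) has_integral sawbridge_coeff l u) {0..1}"
proof -
  define a where "a = pi * real l"
  have "a > 0" "sin a = 0" using assms by (simp_all add: a_def)
  define F1 where "F1 t = sqrt 2 * (sin (a*t) / a^2 - t * cos (a*t) / a)" for t
  define F2 where "F2 t = sqrt 2 * (sin (a*t) / a^2 - (t - 1) * cos (a*t) / a)" for t
  have "((\<lambda>t. t * (sqrt 2 * sin (a * t))) has_integral (F1 u - F1 0)) {0..u}"
    by (rule has_integral_real_derivative[OF assms(1)])
       (use \<open>a > 0\<close> in \<open>auto simp: F1_def field_simps power2_eq_square intro!: derivative_eq_intros\<close>)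
  moreover have "((\<lambda>t. (t - 1) * (sqrt 2 * sin (a * t))) has_integral (F2 1 - F2 u)) {u..1}"
    by (rule has_integral_real_derivative[OF assms(2)])
       (use \<open>a > 0\<close> in \<open>auto simp: F2_def field_simps power2_eq_square intro!: derivative_eq_intros\<close>)
  ultimately have "((\<lambda>t. sawbridge u t * kl_phi l t) has_integral (F1 u - F1 0) + (F2 1 - F2 u)) {0..1}"
    using assms by (intro has_integral_split_at) (auto simp: sawbridge_def kl_phi_def a_def mult.assoc)
  moreover have "(F1 u - F1 0) + (F2 1 - F2 u) = sawbridge_coeff l u"
    using \<open>a > 0\<close> \<open>sin a = 0\<close>
    by (simp add: F1_def F2_def sawbridge_coeff_def a_def[symmetric] field_simps)
  ultimately show ?thesis by simp
qed

lemma has_integral_kl_phi_mult: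
  assumes "k \<ge> 1" "l \<ge> 1"
  shows "((\<lambda>t. kl_phi k t * kl_phi l t) has_integral (if k = l then 1 else 0)) {0..1}"
proof -
  define a where "a = pi * real k"
  define b where "b = pi * real l"
  have "a > 0" "b > 0" using assms by (simp_all add: a_def b_def)
  have prod: "kl_phi k t * kl_phi l t = cos ((a - b) * t) - cos ((a + b) * t)" for t
  proof -
    have "kl_phi k t * kl_phi l t = (sqrt 2 * sqrt 2) * (sin (a*t) * sin (b*t))"
      by (simp add: kl_phi_def a_def b_def mult_ac)
    also have "\<dots> = 2 * ((cos (a*t - b*t) - cos (a*t + b*t)) / 2)"
      by (simp add: sin_times_sin)
    finally show ?thesis by (simp add: algebra_simps)
  qed
  show ?thesis
  proof (cases "k = l")
    case True
    hence "b = a" by (simp add: a_def b_def)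
    define F where "F t = t - sin (2 * a * t) / (2 * a)" for t
    have "((\<lambda>t. cos ((a - b) * t) - cos ((a + b) * t)) has_integral (F 1 - F 0)) {0..1}"
      by (rule has_integral_real_derivative)
         (use \<open>a > 0\<close> \<open>b = a\<close> in \<open>auto simp: F_def field_simps intro!: derivative_eq_intros\<close>)
    moreover have "sin (2 * a) = 0"
      using sin_npi2[of "2 * k"] by (simp add: a_def mult.assoc mult.left_commute)
    ultimately show ?thesis unfolding prod using True by (simp add: F_def)
  next
    case False
    hence "a \<noteq> b" by (simp add: a_def b_def)
    define F where "F t = sin ((a - b) * t) / (a - b) - sin ((a + b) * t) / (a + b)" for t
    have "((\<lambda>t. cos ((a - b) * t) - cos ((a + b) * t)) has_integral (F 1 - F 0)) {0..1}"
      by (rule has_integral_real_derivative)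
         (use \<open>a > 0\<close> \<open>b > 0\<close> \<open>a \<noteq> b\<close> in \<open>auto simp: F_def intro!: derivative_eq_intros\<close>)
    moreover have "sin (a - b) = 0"
      using sin_npi_int[of "int k - int l"] by (simp add: a_def b_def algebra_simps)
    moreover have "sin (a + b) = 0"
      using sin_npi2[of "k + l"] by (simp add: a_def b_def algebra_simps)
    ultimately show ?thesis unfolding prod using False by (simp add: F_def)
  qed
qed

lemma kl_coeff_eq_sawbridge_coeff:
  assumes "0 \<le> u" "u \<le> 1" "l \<ge> 1"
  shows "kl_coeff l u = sawbridge_coeff l u"
proof -
  have "set_integrable lborel {0..1} (\<lambda>t. sawbridge u t * kl_phi l t)"
    unfolding set_integrable_def
  proof (rule integrableI_bounded_set_indicator[where B=2])
    show "AE x in lborel. x \<in> {0..1} \<longrightarrow> norm (sawbridge u x * kl_phi l x) \<le> 2"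
    proof (intro AE_I2 impI)
      fix x :: real assume "x \<in> {0..1}"
      hence "\<bar>sawbridge u x\<bar> \<le> 1" by (auto simp: sawbridge_def)
      moreover have "\<bar>kl_phi l x\<bar> \<le> 2 * 1"
        unfolding kl_phi_def abs_mult by (intro mult_mono) (use real_sqrt_le_mono[of 2 4] in auto)
      ultimately show "norm (sawbridge u x * kl_phi l x) \<le> 2"
        using mult_mono[of "\<bar>sawbridge u x\<bar>" 1 "\<bar>kl_phi l x\<bar>" 2] by (simp add: abs_mult)
    qed
  qed (simp_all add: sawbridge_def kl_phi_def)
  hence "kl_coeff l u = integral {0..1} (\<lambda>t. sawbridge u t * kl_phi l t)"
    unfolding kl_coeff_def by (simp add: interval_integral_eq_integral zero_ereal_def one_ereal_def)
  also have "\<dots> = sawbridge_coeff l u"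
    using has_integral_sawbridge_kl_phi[OF assms] by (rule integral_unique)
  finally show ?thesis .
qed

lemma has_integral_sq_sawbridge_minus_kl_sum:
  assumes "0 \<le> u" "u \<le> 1"
  shows "((\<lambda>t. (sawbridge u t - (\<Sum>l\<in>{1..K}. y l * kl_phi l t))^2) has_integral
          kl_truncation_error K u + (\<Sum>l\<in>{1..K}. (y l - sawbridge_coeff l u)^2)) {0..1}"
proof -
  have expand: "(sawbridge u t - (\<Sum>l\<in>{1..K}. y l * kl_phi l t))^2 =
     (sawbridge u t)^2 - 2 * (\<Sum>l\<in>{1..K}. y l * (sawbridge u t * kl_phi l t))
     + (\<Sum>k\<in>{1..K}. \<Sum>l\<in>{1..K}. y k * y l * (kl_phi k t * kl_phi l t))" for t
    by (simp add: power2_eq_square algebra_simps sum_distrib_left sum_distrib_right sum_product)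
  have "((\<lambda>t. 2 * (\<Sum>l\<in>{1..K}. y l * (sawbridge u t * kl_phi l t))) has_integral
            2 * (\<Sum>l\<in>{1..K}. y l * sawbridge_coeff l u)) {0..1}"
    by (intro has_integral_mult_right has_integral_sum)
       (auto intro!: has_integral_sawbridge_kl_phi assms)
  moreover have "((\<lambda>t. (\<Sum>k\<in>{1..K}. \<Sum>l\<in>{1..K}. y k * y l * (kl_phi k t * kl_phi l t))) has_integral
            (\<Sum>k\<in>{1..K}. \<Sum>l\<in>{1..K}. y k * y l * (if k = l then 1 else 0))) {0..1}"
    by (intro has_integral_sum has_integral_mult_right has_integral_kl_phi_mult) auto
  ultimately have int: "((\<lambda>t. (sawbridge u t - (\<Sum>l\<in>{1..K}. y l * kl_phi l t))^2) has_integral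
      sawbridge_energy u - 2 * (\<Sum>l\<in>{1..K}. y l * sawbridge_coeff l u)
        + (\<Sum>k\<in>{1..K}. \<Sum>l\<in>{1..K}. y k * y l * (if k = l then 1 else 0))) {0..1}"
    unfolding expand by (intro has_integral_add has_integral_diff has_integral_sawbridge_sq assms)
  have diagonal: "(\<Sum>k\<in>{1..K}. \<Sum>l\<in>{1..K}. y k * y l * (if k = l then 1 else 0)) = (\<Sum>l\<in>{1..K}. (y l)^2)"
    by (simp add: if_distrib power2_eq_square sum.delta cong: if_cong)
  have sum_sq_diff: "(\<Sum>l\<in>{1..K}. (y l - sawbridge_coeff l u)^2) = (\<Sum>l\<in>{1..K}. (y l)^2)
      - 2 * (\<Sum>l\<in>{1..K}. y l * sawbridge_coeff l u) + (\<Sum>l\<in>{1..K}. (sawbridge_coeff l u)^2)"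
    by (simp add: power2_diff sum.distrib sum_subtractf sum_distrib_left mult.assoc)
  show ?thesis
    using int unfolding diagonal kl_truncation_error_def
    by (rule has_integral_eq_rhs) (use sum_sq_diff in linarith)
qed

lemma abs_sawbridge_coeff_le_1: "l \<ge> 1 \<Longrightarrow> \<bar>sawbridge_coeff l u\<bar> \<le> 1"
proof -
  assume "l \<ge> 1"
  hence "\<bar>sawbridge_coeff l u\<bar> \<le> sqrt 2 * 1 / (pi * 1)"
    unfolding sawbridge_coeff_def by (simp add: abs_mult abs_divide) (intro frac_le mult_left_mono; simp)
  also have "\<dots> \<le> 1"
    using real_sqrt_le_mono[of 2 4] pi_gt3 by simp
  finally show ?thesis .
qed

lemma has_integral_sawbridge_energy: "(sawbridge_energy has_integral 1/6) {0..1}"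
proof -
  define F where "F u = (u^4 - (1 - u)^4) / 12" for u :: real
  have "(sawbridge_energy has_integral (F 1 - F 0)) {0..1}"
    by (rule has_integral_real_derivative)
       (auto simp: F_def sawbridge_energy_def power3_eq_cube power2_eq_square field_simps
             intro!: derivative_eq_intros)
  thus ?thesis by (simp add: F_def)
qed

lemma has_integral_sawbridge_coeff_sq:
  assumes "l \<ge> 1"
  shows "((\<lambda>u. (sawbridge_coeff l u)^2) has_integral kl_eigenvalue l) {0..1}"
proof -
  define a where "a = pi * real l"
  have "a > 0" using assms by (simp add: a_def)
  have sq: "(sawbridge_coeff l u)^2 = (1 + cos (2 * a * u)) / a^2" for u
  proof -
    have "(sawbridge_coeff l u)^2 = 2 * (cos (a * u))^2 / a^2"
      by (simp add: sawbridge_coeff_def a_def power_mult_distrib power_divide mult.assoc)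
    thus ?thesis by (simp add: cos_double_cos mult.assoc)
  qed
  define F where "F u = (u + sin (2 * a * u) / (2 * a)) / a^2" for u
  have "((\<lambda>u. (1 + cos (2 * a * u)) / a^2) has_integral (F 1 - F 0)) {0..1}"
    by (rule has_integral_real_derivative)
       (use \<open>a > 0\<close> in \<open>auto simp: F_def field_simps intro!: derivative_eq_intros\<close>)
  moreover have "sin (2 * a) = 0"
    using sin_npi2[of "2 * l"] by (simp add: a_def mult.assoc mult.left_commute)
  ultimately show ?thesis by (simp add: sq F_def kl_eigenvalue_def a_def power_mult_distrib)
qed

lemma borel_measurable_kl_truncation_error[measurable]: "kl_truncation_error K \<in> borel_measurable borel"
  unfolding kl_truncation_error_def sawbridge_energy_def sawbridge_coeff_def by measurable

lemma abs_kl_truncation_error_le: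
  assumes "u \<in> {0..1}"
  shows "\<bar>kl_truncation_error K u\<bar> \<le> 1 + real K"
proof -
  have "\<bar>sawbridge_energy u\<bar> \<le> 1"
    using assms power_le_one[of u 3] power_le_one[of "1 - u" 3] by (auto simp: sawbridge_energy_def)
  moreover have "(\<Sum>l\<in>{1..K}. (sawbridge_coeff l u)^2) \<le> (\<Sum>l\<in>{1..K}. 1)"
    using power_le_one[OF abs_ge_zero abs_sawbridge_coeff_le_1, of _ u 2] by (intro sum_mono) simp
  moreover have "0 \<le> (\<Sum>l\<in>{1..K}. (sawbridge_coeff l u)^2)" by (intro sum_nonneg) simp
  ultimately show ?thesis by (simp add: kl_truncation_error_def abs_le_iff)
qed

section \<open>Subtractive dither\<close>

definition dither_error :: "real \<Rightarrow> real \<Rightarrow> real" where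
  "dither_error z s = real_of_int (round (z + s)) - z - s"

lemma borel_measurable_dither_error[measurable]:
  assumes [measurable]: "f \<in> borel_measurable M" "g \<in> borel_measurable M"
  shows "(\<lambda>x. dither_error (f x) (g x)) \<in> borel_measurable M"
proof -
  have "(\<lambda>x. real_of_int \<lfloor>f x + g x + 1/2\<rfloor>) \<in> borel_measurable M"
    using measurable_compose[OF _ borel_measurable_real_floor, of "\<lambda>x. f x + g x + 1/2" M] by simp
  thus ?thesis unfolding dither_error_def round_def by measurable
qed

lemma abs_dither_error_le: "\<bar>dither_error z s\<bar> \<le> 1/2"
  unfolding dither_error_def using of_int_round_abs_le[of "z + s"] by (simp add: diff_diff_eq)

lemma dither_error_cases:
  fixes z :: real
  defines "c \<equiv> real_of_int \<lfloor>z\<rfloor> - z"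
  shows "s < c + 1/2 \<Longrightarrow> -1/2 \<le> s \<Longrightarrow> dither_error z s = c - s"
    and "c + 1/2 \<le> s \<Longrightarrow> s < c + 3/2 \<Longrightarrow> dither_error z s = c + 1 - s"
proof -
  have floor: "real_of_int \<lfloor>z\<rfloor> \<le> z" "z < real_of_int \<lfloor>z\<rfloor> + 1" by linarith+
  show "dither_error z s = c - s" if "s < c + 1/2" "-1/2 \<le> s"
  proof -
    have "\<lfloor>z + s + 1/2\<rfloor> = \<lfloor>z\<rfloor>"
      using that floor unfolding c_def by (intro floor_unique) linarith+
    thus ?thesis by (simp add: dither_error_def round_def c_def add.assoc)
  qed
  show "dither_error z s = c + 1 - s" if "c + 1/2 \<le> s" "s < c + 3/2"
  proof -
    have "\<lfloor>z + s + 1/2\<rfloor> = \<lfloor>z\<rfloor> + 1"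
      using that floor unfolding c_def by (intro floor_unique) simp_all
    thus ?thesis by (simp add: dither_error_def round_def c_def add.assoc)
  qed
qed

lemma has_integral_dither_error_power:
  "((\<lambda>s. (dither_error z s)^n) has_integral ((1/2)^(n + 1) - (-1/2)^(n + 1)) / real (n + 1)) {-1/2..1/2}"
proof -
  define c where "c = real_of_int \<lfloor>z\<rfloor> - z"
  have c: "-1 < c" "c \<le> 0" unfolding c_def by linarith+
  define F where "F x = - (x ^ (n + 1)) / real (n + 1)" for x :: real
  have F: "((\<lambda>s. F (d - s)) has_real_derivative (d - s)^n) (at s)" for d s
    unfolding F_def by (auto intro!: derivative_eq_intros simp del: power_Suc)
  have "((\<lambda>s. (dither_error z s)^n) has_integral
      (F (-1/2) - F (c + 1/2)) + (F (c + 1/2) - F (1/2))) {-1/2..1/2}"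
  proof (rule has_integral_split_at)
    show "((\<lambda>s. (c - s)^n) has_integral F (-1/2) - F (c + 1/2)) {-1/2..c + 1/2}"
      using has_integral_real_derivative[OF _ F, of "-1/2" "c + 1/2" c] c by simp
    show "((\<lambda>s. (c + 1 - s)^n) has_integral F (c + 1/2) - F (1/2)) {c + 1/2..1/2}"
      using has_integral_real_derivative[OF _ F, of "c + 1/2" "1/2" "c + 1"] c by (simp add: add.commute)
  qed (use c dither_error_cases[where z=z, folded c_def] in auto)
  moreover have "F (-1/2) - F (c + 1/2) + (F (c + 1/2) - F (1/2))
      = ((1/2)^(n + 1) - (-1/2)^(n + 1)) / real (n + 1)"
  proof -
    have "F (-1/2) - F (c + 1/2) + (F (c + 1/2) - F (1/2)) = F (-1/2) - F (1/2)"
      by simp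
    also have "\<dots> = ((1/2)^(n + 1) - (-1/2)^(n + 1)) / real (n + 1)"
      unfolding F_def by (simp only: diff_divide_distrib minus_divide_left[symmetric] diff_minus_eq_add)
    finally show ?thesis .
  qed
  ultimately show ?thesis by simp
qed

lemma has_integral_dithered_estimate_sq_error:
  "((\<lambda>s. (a * (y + \<delta> * dither_error z s) - y)^2) has_integral (a - 1)^2 * y^2 + a^2 * \<delta>^2 / 12)
    {-1/2..1/2}"
proof -
  have mean: "((\<lambda>s. dither_error z s) has_integral 0) {-1/2..1/2}"
    using has_integral_dither_error_power[of z 1] by simp
  have second_moment: "((\<lambda>s. (dither_error z s)^2) has_integral 1/12) {-1/2..1/2}"
    using has_integral_dither_error_power[of z 2] by (simp add: power3_eq_cube)
  have const: "((\<lambda>s. (a - 1)^2 * y^2) has_integral (a - 1)^2 * y^2) {-1/2..1/2::real}"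
    using has_integral_const_real[of "(a - 1)^2 * y^2" "-1/2" "1/2"] by simp
  have expand: "(a * (y + \<delta> * dither_error z s) - y)^2 = (a - 1)^2 * y^2
      + (2 * (a - 1) * a * \<delta> * y) * dither_error z s + (a^2 * \<delta>^2) * (dither_error z s)^2" for s
    by (simp add: power2_eq_square algebra_simps)
  have "((\<lambda>s. (a - 1)^2 * y^2 + (2 * (a - 1) * a * \<delta> * y) * dither_error z s
      + (a^2 * \<delta>^2) * (dither_error z s)^2) has_integral
      (a - 1)^2 * y^2 + (2 * (a - 1) * a * \<delta> * y) * 0 + (a^2 * \<delta>^2) * (1/12)) {-1/2..1/2}"
    by (intro has_integral_add has_integral_mult_right const mean second_moment)
  thus ?thesis unfolding expand by simp
qed

section \<open>The probability space\<close>

abbreviation source_dist :: "real measure" where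
  "source_dist \<equiv> uniform_measure lborel {0..1}"

abbreviation dither_dist :: "real measure" where
  "dither_dist \<equiv> uniform_measure lborel {-1/2..1/2}"

lemma prob_space_dither_dist: "prob_space dither_dist"
  by (rule prob_space_uniform_measure) simp_all

lemma pair_prob_space_saw: "pair_prob_space source_dist (\<Pi>\<^sub>M l\<in>I. dither_dist)"
proof -
  interpret source: prob_space source_dist
    by (rule prob_space_uniform_measure) simp_all
  interpret dithers: prob_space "\<Pi>\<^sub>M l\<in>I. dither_dist"
    by (intro prob_space_PiM prob_space_dither_dist)
  show ?thesis by unfold_locales
qed

lemma prob_space_saw_space: "prob_space (saw_space \<Delta>)"
proof -
  interpret pair_prob_space source_dist "\<Pi>\<^sub>M l\<in>{1..K_par \<Delta>}. dither_dist"
    by (rule pair_prob_space_saw)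
  show ?thesis unfolding saw_space_def by (rule P.prob_space_axioms)
qed

lemma AE_saw_space_source: "AE \<omega> in saw_space \<Delta>. fst \<omega> \<in> {0..1}"
proof -
  interpret dithers: prob_space "\<Pi>\<^sub>M l\<in>{1..K_par \<Delta>}. dither_dist"
    by (intro prob_space_PiM prob_space_dither_dist)
  have "AE u in distr (source_dist \<Otimes>\<^sub>M (\<Pi>\<^sub>M l\<in>{1..K_par \<Delta>}. dither_dist)) source_dist fst. u \<in> {0..1}"
    by (simp only: dithers.distr_pair_fst) (rule AE_uniform_measureI, auto)
  thus ?thesis
    using AE_distrD[of fst _ source_dist "\<lambda>u. u \<in> {0..1}"]
    unfolding saw_space_def by (auto simp del: atLeastAtMost_iff)
qed

lemma measurable_saw_space_fst: "fst \<in> borel_measurable (saw_space \<Delta>)"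
  unfolding saw_space_def by (simp add: measurable_cong_sets[OF refl sets_uniform_measure])

lemma measurable_saw_space_dither:
  assumes "l \<in> {1..K_par \<Delta>}"
  shows "(\<lambda>\<omega>. snd \<omega> l) \<in> borel_measurable (saw_space \<Delta>)"
proof -
  have "(\<lambda>\<omega>. snd \<omega> l) \<in> measurable (source_dist \<Otimes>\<^sub>M (\<Pi>\<^sub>M l\<in>{1..K_par \<Delta>}. dither_dist)) dither_dist"
    by (rule measurable_compose[OF measurable_snd measurable_component_singleton[OF assms]])
  thus ?thesis
    unfolding saw_space_def by (simp add: measurable_cong_sets[OF refl sets_uniform_measure])
qed

lemma integral_saw_space_source:
  fixes f :: "real \<Rightarrow> real"
  assumes [measurable]: "f \<in> borel_measurable borel"
    and bounded: "\<And>u. u \<in> {0..1} \<Longrightarrow> \<bar>f u\<bar> \<le> B"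
  shows "integrable (saw_space \<Delta>) (\<lambda>\<omega>. f (fst \<omega>))"
    and "(\<integral>\<omega>. f (fst \<omega>) \<partial>saw_space \<Delta>) = (\<integral>u. f u \<partial>source_dist)"
proof -
  interpret source: prob_space source_dist
    by (rule prob_space_uniform_measure) simp_all
  interpret dithers: prob_space "\<Pi>\<^sub>M l\<in>{1..K_par \<Delta>}. dither_dist"
    by (intro prob_space_PiM prob_space_dither_dist)
  have distr: "distr (saw_space \<Delta>) source_dist fst = source_dist"
    unfolding saw_space_def by (rule dithers.distr_pair_fst) unfold_locales
  have fst: "fst \<in> measurable (saw_space \<Delta>) source_dist"
    unfolding saw_space_def by (rule measurable_fst)
  have "integrable source_dist f"
  proof (rule source.integrable_const_bound[where B=B])
    show "AE u in source_dist. norm (f u) \<le> B"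
      by (rule AE_uniform_measureI) (use bounded in auto)
  qed simp
  moreover have f: "f \<in> borel_measurable source_dist"
    by (simp add: measurable_cong_sets[OF sets_uniform_measure refl])
  ultimately show "integrable (saw_space \<Delta>) (\<lambda>\<omega>. f (fst \<omega>))"
    using integrable_distr_eq[OF fst f] distr by simp
  show "(\<integral>\<omega>. f (fst \<omega>) \<partial>saw_space \<Delta>) = (\<integral>u. f u \<partial>source_dist)"
    using integral_distr[OF fst f] distr by simp
qed

lemma integral_saw_space_dither:
  fixes h :: "real \<Rightarrow> real \<Rightarrow> real"
  assumes l: "l \<in> {1..K_par \<Delta>}"
    and meas_h: "(\<lambda>(u, s). h u s) \<in> borel_measurable (borel \<Otimes>\<^sub>M borel)"
    and bounded: "\<And>u s. u \<in> {0..1} \<Longrightarrow> \<bar>h u s\<bar> \<le> B"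
  shows "integrable (saw_space \<Delta>) (\<lambda>\<omega>. h (fst \<omega>) (snd \<omega> l))"
    and "(\<integral>\<omega>. h (fst \<omega>) (snd \<omega> l) \<partial>saw_space \<Delta>) = (\<integral>u. (\<integral>s. h u s \<partial>dither_dist) \<partial>source_dist)"
proof -
  interpret S: prob_space "saw_space \<Delta>" by (rule prob_space_saw_space)
  interpret P: pair_prob_space source_dist "\<Pi>\<^sub>M l\<in>{1..K_par \<Delta>}. dither_dist"
    by (rule pair_prob_space_saw)
  have meas: "(\<lambda>\<omega>. h (fst \<omega>) (snd \<omega> l)) \<in> borel_measurable (saw_space \<Delta>)"
    using measurable_compose[OF measurable_Pair[OF measurable_saw_space_fst
        measurable_saw_space_dither[OF l]] meas_h] by simp
  show int: "integrable (saw_space \<Delta>) (\<lambda>\<omega>. h (fst \<omega>) (snd \<omega> l))"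
  proof (rule S.integrable_const_bound[OF _ meas])
    show "AE \<omega> in saw_space \<Delta>. norm (h (fst \<omega>) (snd \<omega> l)) \<le> B"
      using AE_saw_space_source[of \<Delta>] by eventually_elim (use bounded in auto)
  qed
  have "(\<integral>\<omega>. h (fst \<omega>) (snd \<omega> l) \<partial>saw_space \<Delta>)
      = (\<integral>u. (\<integral>d. h u (d l) \<partial>(\<Pi>\<^sub>M l\<in>{1..K_par \<Delta>}. dither_dist)) \<partial>source_dist)"
    using P.integral_fst'[of "\<lambda>\<omega>. h (fst \<omega>) (snd \<omega> l)"] int by (simp add: saw_space_def)
  also have "\<dots> = (\<integral>u. (\<integral>s. h u s \<partial>dither_dist) \<partial>source_dist)"
  proof (rule Bochner_Integration.integral_cong[OF refl])
    fix u
    have "(\<integral>s. h u s \<partial>dither_dist)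
        = (\<integral>s. h u s \<partial>distr (\<Pi>\<^sub>M l\<in>{1..K_par \<Delta>}. dither_dist) dither_dist (\<lambda>d. d l))"
      by (subst distr_PiM_component[OF prob_space_dither_dist l]) simp
    also have "\<dots> = (\<integral>d. h u (d l) \<partial>(\<Pi>\<^sub>M l\<in>{1..K_par \<Delta>}. dither_dist))"
      by (rule integral_distr) (use l measurable_Pair2[OF meas_h] in auto)
    finally show "(\<integral>d. h u (d l) \<partial>(\<Pi>\<^sub>M l\<in>{1..K_par \<Delta>}. dither_dist)) = (\<integral>s. h u s \<partial>dither_dist)"
      by simp
  qed
  finally show "(\<integral>\<omega>. h (fst \<omega>) (snd \<omega> l) \<partial>saw_space \<Delta>) = (\<integral>u. (\<integral>s. h u s \<partial>dither_dist) \<partial>source_dist)" .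
qed

section \<open>The Wiener decoder\<close>

lemma K_par_ge_1:
  assumes "0 < \<Delta>"
  shows "1 \<le> K_par \<Delta>"
proof -
  have "0 < 1 / (pi * sqrt (D_par \<Delta>))" using assms by (simp add: D_par_def)
  hence "1 \<le> \<lceil>1 / (pi * sqrt (D_par \<Delta>))\<rceil>" by (simp add: one_le_ceiling)
  thus ?thesis unfolding K_par_def by linarith
qed

lemma real_K_par_ge:
  assumes "0 < \<Delta>"
  shows "2 / (pi^2 * \<Delta>) \<le> real (K_par \<Delta>)"
proof -
  have sqrt_D: "sqrt (D_par \<Delta>) = \<Delta> * pi / 2"
    using assms by (simp add: D_par_def real_sqrt_divide real_sqrt_mult power_mult_distrib[symmetric])
  have "1 / (pi * sqrt (D_par \<Delta>)) = 2 / (pi^2 * \<Delta>)"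
    using assms by (simp add: sqrt_D power2_eq_square field_simps)
  moreover have "1 / (pi * sqrt (D_par \<Delta>)) \<le> real (K_par \<Delta>)"
    unfolding K_par_def by linarith
  ultimately show ?thesis by simp
qed

lemma delta_par_pos: "0 < \<Delta> \<Longrightarrow> 0 < delta_par \<Delta>"
  using K_par_ge_1[of \<Delta>] gamma_saw(1) by (simp add: delta_par_def)

definition dither_noise_var :: "real \<Rightarrow> real" where
  "dither_noise_var \<Delta> = (delta_par \<Delta>)^2 / 12"

lemma dither_noise_var_eq: "0 < \<Delta> \<Longrightarrow> dither_noise_var \<Delta> = gamma_saw / (real (K_par \<Delta>))^2"
  using gamma_saw(1) by (simp add: dither_noise_var_def delta_par_def power_divide)

definition wiener_gain :: "real \<Rightarrow> nat \<Rightarrow> real" where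
  "wiener_gain \<Delta> l = kl_eigenvalue l / (kl_eigenvalue l + dither_noise_var \<Delta>)"

text \<open>
  Since \<open>\<delta> (c\<^sub>l - U\<^sub>l) = Y\<^sub>l + \<delta> e\<^sub>l\<close> with the dither error \<open>e\<^sub>l\<close>, the decoder scales this unbiased
  reading of \<open>Y\<^sub>l\<close> by the Wiener gain \<open>\<lambda>\<^sub>l / (\<lambda>\<^sub>l + \<delta>\<^sup>2/12)\<close>.
\<close>

definition wiener_decoder :: "real \<Rightarrow> (nat \<Rightarrow> int) \<Rightarrow> (nat \<Rightarrow> real) \<Rightarrow> real \<Rightarrow> real" where
  "wiener_decoder \<Delta> c d t =
     (\<Sum>l\<in>{1..K_par \<Delta>}. wiener_gain \<Delta> l * delta_par \<Delta> * (real_of_int (c l) - d l) * kl_phi l t)"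

definition decoded_coeff :: "real \<Rightarrow> nat \<Rightarrow> real \<Rightarrow> real \<Rightarrow> real" where
  "decoded_coeff \<Delta> l u s = wiener_gain \<Delta> l *
     (sawbridge_coeff l u + delta_par \<Delta> * dither_error (sawbridge_coeff l u / delta_par \<Delta>) s)"

definition realized_distortion :: "real \<Rightarrow> real \<Rightarrow> (nat \<Rightarrow> real) \<Rightarrow> real" where
  "realized_distortion \<Delta> u d = kl_truncation_error (K_par \<Delta>) u
     + (\<Sum>l\<in>{1..K_par \<Delta>}. (decoded_coeff \<Delta> l u (d l) - sawbridge_coeff l u)^2)"

lemma wiener_decoder_encoder:
  assumes "0 < \<Delta>" "0 \<le> u" "u \<le> 1"
  shows "wiener_decoder \<Delta> (encoder \<Delta> u d) d t = (\<Sum>l\<in>{1..K_par \<Delta>}. decoded_coeff \<Delta> l u (d l) * kl_phi l t)"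
  unfolding wiener_decoder_def
proof (rule sum.cong[OF refl])
  fix l assume l: "l \<in> {1..K_par \<Delta>}"
  hence "encoder \<Delta> u d l = round (sawbridge_coeff l u / delta_par \<Delta> + d l)"
    using assms kl_coeff_eq_sawbridge_coeff[of u l] by (simp add: encoder_def)
  thus "wiener_gain \<Delta> l * delta_par \<Delta> * (real_of_int (encoder \<Delta> u d l) - d l) * kl_phi l t =
        decoded_coeff \<Delta> l u (d l) * kl_phi l t"
    using delta_par_pos[OF assms(1)] by (simp add: decoded_coeff_def dither_error_def field_simps)
qed

lemma has_integral_sq_error_wiener_decoder:
  assumes "0 < \<Delta>" "0 \<le> u" "u \<le> 1"
  shows "((\<lambda>t. (sawbridge u t - wiener_decoder \<Delta> (encoder \<Delta> u d) d t)^2) has_integral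
          realized_distortion \<Delta> u d) {0..1}"
  unfolding wiener_decoder_encoder[OF assms] realized_distortion_def
  using assms(2,3) by (rule has_integral_sq_sawbridge_minus_kl_sum)

lemma scalar_wiener_mse:
  fixes \<theta> \<sigma> :: real
  assumes "0 < \<theta>" "0 < \<sigma>"
  shows "(\<theta> / (\<theta> + \<sigma>) - 1)^2 * \<theta> + (\<theta> / (\<theta> + \<sigma>))^2 * \<sigma> = \<theta> * \<sigma> / (\<theta> + \<sigma>)"
proof -
  define s where "s = \<theta> + \<sigma>"
  have "s > 0" using assms by (simp add: s_def)
  have "\<theta> / s - 1 = - \<sigma> / s" using \<open>s > 0\<close> by (simp add: s_def field_simps)
  hence "(\<theta> / s - 1)^2 * \<theta> + (\<theta> / s)^2 * \<sigma> = (\<sigma>^2 * \<theta> + \<theta>^2 * \<sigma>) / s^2"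
    by (simp add: power_divide add_divide_distrib)
  also have "\<dots> = \<theta> * \<sigma> * s / s^2" by (simp add: s_def power2_eq_square algebra_simps)
  also have "\<dots> = \<theta> * \<sigma> / s" using \<open>s > 0\<close> by (simp add: power2_eq_square)
  finally show ?thesis unfolding s_def .
qed

lemma abs_dithered_estimate_error_le:
  "\<bar>a * (y + \<delta> * dither_error z s) - y\<bar> \<le> \<bar>a\<bar> * (\<bar>y\<bar> + \<bar>\<delta>\<bar>) + \<bar>y\<bar>"
proof -
  have "\<bar>\<delta> * dither_error z s\<bar> \<le> \<bar>\<delta>\<bar> * 1"
    using abs_dither_error_le[of z s] by (simp add: abs_mult mult_left_le)
  hence "\<bar>y + \<delta> * dither_error z s\<bar> \<le> \<bar>y\<bar> + \<bar>\<delta>\<bar>" by linarith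
  hence "\<bar>a * (y + \<delta> * dither_error z s)\<bar> \<le> \<bar>a\<bar> * (\<bar>y\<bar> + \<bar>\<delta>\<bar>)"
    by (simp add: abs_mult mult_left_mono)
  thus ?thesis by linarith
qed

lemma integral_dither_dist_dithered_estimate_sq_error:
  "(\<integral>s. (a * (y + \<delta> * dither_error z s) - y)^2 \<partial>dither_dist) = (a - 1)^2 * y^2 + a^2 * \<delta>^2 / 12"
proof -
  have bound: "\<bar>(a * (y + \<delta> * dither_error z s) - y)^2\<bar> \<le> (\<bar>a\<bar> * (\<bar>y\<bar> + \<bar>\<delta>\<bar>) + \<bar>y\<bar>)^2"
    if "s \<in> {-1/2..1/2}" for s
    using power_mono[OF abs_dithered_estimate_error_le abs_ge_zero, of a y \<delta> z s 2] by simp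
  have "(\<lambda>s. (a * (y + \<delta> * dither_error z s) - y)^2) \<in> borel_measurable borel"
    by measurable
  from integral_uniform_measure_interval[OF _ this bound has_integral_dithered_estimate_sq_error]
  show ?thesis by simp
qed

lemma integral_source_dist_sawbridge_coeff_sq:
  assumes "l \<ge> 1"
  shows "(\<integral>u. c * (sawbridge_coeff l u)^2 + b \<partial>source_dist) = c * kl_eigenvalue l + b"
proof -
  have "((\<lambda>u. b) has_integral b) {0..1::real}"
    using has_integral_const_real[of b 0 1] by simp
  hence "((\<lambda>u. c * (sawbridge_coeff l u)^2 + b) has_integral c * kl_eigenvalue l + b) {0..1}"
    by (intro has_integral_add has_integral_mult_right has_integral_sawbridge_coeff_sq assms)
  moreover have "\<bar>c * (sawbridge_coeff l u)^2 + b\<bar> \<le> \<bar>c\<bar> + \<bar>b\<bar>" for u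
  proof -
    have "(sawbridge_coeff l u)^2 \<le> 1"
      using power_le_one[OF abs_ge_zero abs_sawbridge_coeff_le_1[OF assms], of u 2] by simp
    hence "\<bar>c * (sawbridge_coeff l u)^2\<bar> \<le> \<bar>c\<bar>"
      by (simp add: abs_mult mult_left_le)
    thus ?thesis by linarith
  qed
  moreover have "(\<lambda>u. c * (sawbridge_coeff l u)^2 + b) \<in> borel_measurable borel"
    unfolding sawbridge_coeff_def by measurable
  ultimately show ?thesis
    using integral_uniform_measure_interval[of 0 1 _ "\<bar>c\<bar> + \<bar>b\<bar>"] by simp
qed

lemma abs_decoded_coeff_error_le:
  assumes "l \<ge> 1"
  shows "\<bar>decoded_coeff \<Delta> l u s - sawbridge_coeff l u\<bar> \<le> \<bar>wiener_gain \<Delta> l\<bar> * (1 + \<bar>delta_par \<Delta>\<bar>) + 1"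
proof -
  have "\<bar>wiener_gain \<Delta> l\<bar> * (\<bar>sawbridge_coeff l u\<bar> + \<bar>delta_par \<Delta>\<bar>) + \<bar>sawbridge_coeff l u\<bar>
      \<le> \<bar>wiener_gain \<Delta> l\<bar> * (1 + \<bar>delta_par \<Delta>\<bar>) + 1"
    using abs_sawbridge_coeff_le_1[OF assms, of u] by (intro add_mono mult_left_mono) auto
  thus ?thesis
    unfolding decoded_coeff_def using abs_dithered_estimate_error_le by (rule order_trans[rotated])
qed

lemma integral_decoded_coeff_sq_error:
  assumes "0 < \<Delta>" and l: "l \<in> {1..K_par \<Delta>}"
  defines "\<theta> \<equiv> kl_eigenvalue l" and "\<sigma> \<equiv> dither_noise_var \<Delta>"
  shows "integrable (saw_space \<Delta>) (\<lambda>\<omega>. (decoded_coeff \<Delta> l (fst \<omega>) (snd \<omega> l) - sawbridge_coeff l (fst \<omega>))^2)"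
    and "(\<integral>\<omega>. (decoded_coeff \<Delta> l (fst \<omega>) (snd \<omega> l) - sawbridge_coeff l (fst \<omega>))^2 \<partial>saw_space \<Delta>)
          = \<theta> * \<sigma> / (\<theta> + \<sigma>)"
proof -
  define a where "a = wiener_gain \<Delta> l"
  define \<delta> where "\<delta> = delta_par \<Delta>"
  have "\<delta> > 0" using delta_par_pos[OF assms(1)] by (simp add: \<delta>_def)
  have "l \<ge> 1" using l by simp
  have "\<theta> > 0" "\<sigma> > 0"
    using \<open>l \<ge> 1\<close> \<open>\<delta> > 0\<close> by (simp_all add: \<theta>_def \<sigma>_def kl_eigenvalue_def dither_noise_var_def \<delta>_def)
  have a: "a = \<theta> / (\<theta> + \<sigma>)" by (simp add: a_def wiener_gain_def \<theta>_def \<sigma>_def)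
  define h where "h u s = (decoded_coeff \<Delta> l u s - sawbridge_coeff l u)^2" for u s
  have h: "h u s = (a * (sawbridge_coeff l u + \<delta> * dither_error (sawbridge_coeff l u / \<delta>) s)
      - sawbridge_coeff l u)^2" for u s
    by (simp add: h_def decoded_coeff_def a_def \<delta>_def)
  have meas_h: "(\<lambda>(u, s). h u s) \<in> borel_measurable (borel \<Otimes>\<^sub>M borel)"
    unfolding h sawbridge_coeff_def by measurable
  have bound_h: "\<bar>h u s\<bar> \<le> (\<bar>a\<bar> * (1 + \<bar>\<delta>\<bar>) + 1)^2" for u s
    using power_mono[OF abs_decoded_coeff_error_le[OF \<open>l \<ge> 1\<close>, of \<Delta> u s] abs_ge_zero, of 2]
    by (simp add: h_def a_def \<delta>_def)
  have "(\<integral>\<omega>. h (fst \<omega>) (snd \<omega> l) \<partial>saw_space \<Delta>) = (\<integral>u. (\<integral>s. h u s \<partial>dither_dist) \<partial>source_dist)"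
    by (rule integral_saw_space_dither(2)[OF l meas_h bound_h])
  also have "\<dots> = (\<integral>u. (a - 1)^2 * (sawbridge_coeff l u)^2 + a^2 * \<delta>^2 / 12 \<partial>source_dist)"
    unfolding h integral_dither_dist_dithered_estimate_sq_error ..
  also have "\<dots> = (a - 1)^2 * \<theta> + a^2 * \<delta>^2 / 12"
    unfolding \<theta>_def by (rule integral_source_dist_sawbridge_coeff_sq[OF \<open>l \<ge> 1\<close>])
  also have "\<dots> = \<theta> * \<sigma> / (\<theta> + \<sigma>)"
    using scalar_wiener_mse[OF \<open>\<theta> > 0\<close> \<open>\<sigma> > 0\<close>] by (simp add: a \<sigma>_def dither_noise_var_def \<delta>_def)
  finally show "(\<integral>\<omega>. (decoded_coeff \<Delta> l (fst \<omega>) (snd \<omega> l) - sawbridge_coeff l (fst \<omega>))^2 \<partial>saw_space \<Delta>)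
          = \<theta> * \<sigma> / (\<theta> + \<sigma>)"
    unfolding h_def .
  show "integrable (saw_space \<Delta>) (\<lambda>\<omega>. (decoded_coeff \<Delta> l (fst \<omega>) (snd \<omega> l) - sawbridge_coeff l (fst \<omega>))^2)"
    using integral_saw_space_dither(1)[OF l meas_h bound_h] by (simp add: h_def)
qed

lemma integral_source_dist_kl_truncation_error:
  "(\<integral>u. kl_truncation_error K u \<partial>source_dist) = 1/6 - (\<Sum>l\<in>{1..K}. kl_eigenvalue l)"
proof -
  have "(kl_truncation_error K has_integral 1/6 - (\<Sum>l\<in>{1..K}. kl_eigenvalue l)) {0..1}"
    unfolding kl_truncation_error_def
    by (intro has_integral_diff has_integral_sum has_integral_sawbridge_energy
        has_integral_sawbridge_coeff_sq) auto
  thus ?thesis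
    using integral_uniform_measure_interval[of 0 1 _ "1 + real K"] abs_kl_truncation_error_le by simp
qed

lemma integral_realized_distortion:
  assumes "0 < \<Delta>"
  defines "\<sigma> \<equiv> dither_noise_var \<Delta>"
  shows "integrable (saw_space \<Delta>) (\<lambda>\<omega>. realized_distortion \<Delta> (fst \<omega>) (snd \<omega>))"
    and "(\<integral>\<omega>. realized_distortion \<Delta> (fst \<omega>) (snd \<omega>) \<partial>saw_space \<Delta>)
      = 1/6 - (\<Sum>l\<in>{1..K_par \<Delta>}. kl_eigenvalue l)
        + (\<Sum>l\<in>{1..K_par \<Delta>}. kl_eigenvalue l * \<sigma> / (kl_eigenvalue l + \<sigma>))"
proof -
  define E where "E l \<omega> = (decoded_coeff \<Delta> l (fst \<omega>) (snd \<omega> l) - sawbridge_coeff l (fst \<omega>))^2" for l \<omega>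
  note R = integral_saw_space_source[where \<Delta>=\<Delta>, OF borel_measurable_kl_truncation_error[of "K_par \<Delta>"]
      abs_kl_truncation_error_le, unfolded integral_source_dist_kl_truncation_error]
  have E: "integrable (saw_space \<Delta>) (E l)"
    "(\<integral>\<omega>. E l \<omega> \<partial>saw_space \<Delta>) = kl_eigenvalue l * \<sigma> / (kl_eigenvalue l + \<sigma>)"
    if "l \<in> {1..K_par \<Delta>}" for l
    using integral_decoded_coeff_sq_error[OF assms(1) that] unfolding E_def \<sigma>_def by simp_all
  have eq: "realized_distortion \<Delta> (fst \<omega>) (snd \<omega>)
      = kl_truncation_error (K_par \<Delta>) (fst \<omega>) + (\<Sum>l\<in>{1..K_par \<Delta>}. E l \<omega>)" for \<omega>
    by (simp add: realized_distortion_def E_def)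
  have sum_E: "integrable (saw_space \<Delta>) (\<lambda>\<omega>. \<Sum>l\<in>{1..K_par \<Delta>}. E l \<omega>)"
    using E(1) by (intro Bochner_Integration.integrable_sum) auto
  show "integrable (saw_space \<Delta>) (\<lambda>\<omega>. realized_distortion \<Delta> (fst \<omega>) (snd \<omega>))"
    unfolding eq using R(1) sum_E by (rule Bochner_Integration.integrable_add)
  have "(\<integral>\<omega>. realized_distortion \<Delta> (fst \<omega>) (snd \<omega>) \<partial>saw_space \<Delta>)
      = (\<integral>\<omega>. kl_truncation_error (K_par \<Delta>) (fst \<omega>) + (\<Sum>l\<in>{1..K_par \<Delta>}. E l \<omega>) \<partial>saw_space \<Delta>)"
    by (simp only: eq)
  also have "\<dots> = (\<integral>\<omega>. kl_truncation_error (K_par \<Delta>) (fst \<omega>) \<partial>saw_space \<Delta>)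
        + (\<integral>\<omega>. (\<Sum>l\<in>{1..K_par \<Delta>}. E l \<omega>) \<partial>saw_space \<Delta>)"
    by (rule Bochner_Integration.integral_add[OF R(1) sum_E])
  also have "(\<integral>\<omega>. (\<Sum>l\<in>{1..K_par \<Delta>}. E l \<omega>) \<partial>saw_space \<Delta>)
      = (\<Sum>l\<in>{1..K_par \<Delta>}. \<integral>\<omega>. E l \<omega> \<partial>saw_space \<Delta>)"
    by (rule Bochner_Integration.integral_sum) (use E(1) in auto)
  finally show "(\<integral>\<omega>. realized_distortion \<Delta> (fst \<omega>) (snd \<omega>) \<partial>saw_space \<Delta>)
      = 1/6 - (\<Sum>l\<in>{1..K_par \<Delta>}. kl_eigenvalue l)
        + (\<Sum>l\<in>{1..K_par \<Delta>}. kl_eigenvalue l * \<sigma> / (kl_eigenvalue l + \<sigma>))"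
    using R(2) E(2) by simp
qed

lemma sum_wiener_mse_le:
  assumes "0 < \<Delta>"
  defines "\<sigma> \<equiv> dither_noise_var \<Delta>" and "K \<equiv> K_par \<Delta>"
  shows "(\<Sum>l\<in>{1..K}. kl_eigenvalue l * \<sigma> / (kl_eigenvalue l + \<sigma>)) \<le> 1 / (pi^2 * real K)"
proof -
  define g where "g = gamma_saw"
  define c where "c = pi * sqrt g"
  have "g > 0" "arctan c = 1 / c" using gamma_saw by (simp_all add: g_def c_def)
  have "real K > 0" using K_par_ge_1[OF assms(1)] by (simp add: K_def)
  have "c > 0" using \<open>g > 0\<close> by (simp add: c_def)
  have summand: "kl_eigenvalue l * \<sigma> / (kl_eigenvalue l + \<sigma>)
      = sqrt g / (pi * real K) * (c * real K / ((real K)^2 + c^2 * (real l)^2))" if "l \<ge> 1" for l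
    using that \<open>g > 0\<close> \<open>real K > 0\<close>
    by (simp add: \<sigma>_def K_def dither_noise_var_eq[OF assms(1)] kl_eigenvalue_def c_def g_def
        field_simps power2_eq_square)
  have "(\<Sum>l\<in>{1..K}. kl_eigenvalue l * \<sigma> / (kl_eigenvalue l + \<sigma>))
      = sqrt g / (pi * real K) * (\<Sum>l=1..K. c * real K / ((real K)^2 + c^2 * (real l)^2))"
    by (simp add: summand sum_distrib_left)
  also have "\<dots> \<le> sqrt g / (pi * real K) * arctan c"
    using \<open>c > 0\<close> \<open>g > 0\<close> \<open>real K > 0\<close> by (intro mult_left_mono sum_arctan_riemann_le) auto
  also have "\<dots> = 1 / (pi^2 * real K)"
    unfolding \<open>arctan c = 1 / c\<close> using \<open>g > 0\<close> by (simp add: c_def power2_eq_square)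
  finally show ?thesis .
qed

lemma kl_eigenvalue_tail_le:
  assumes "K \<ge> 1"
  shows "1/6 - (\<Sum>l\<in>{1..K}. kl_eigenvalue l) \<le> 1 / (pi^2 * real K)"
proof -
  have "pi^2/6 / pi^2 \<le> ((\<Sum>l=1..K. 1 / (real l)^2) + 1 / real K) / pi^2"
    using pi_sq_div_6_le_partial_sum[OF assms] by (rule divide_right_mono) simp
  thus ?thesis
    by (simp add: kl_eigenvalue_def add_divide_distrib sum_divide_distrib mult.commute)
qed

lemma expected_realized_distortion_le:
  assumes "0 < \<Delta>"
  defines "\<sigma> \<equiv> dither_noise_var \<Delta>" and "K \<equiv> K_par \<Delta>"
  shows "1/6 - (\<Sum>l\<in>{1..K}. kl_eigenvalue l) + (\<Sum>l\<in>{1..K}. kl_eigenvalue l * \<sigma> / (kl_eigenvalue l + \<sigma>))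
    \<le> \<Delta>"
proof -
  have "2 / (pi^2 * real K) \<le> \<Delta>"
    using real_K_par_ge[OF assms(1)] K_par_ge_1[OF assms(1)] assms(1)
    by (simp add: K_def field_simps)
  thus ?thesis
    using kl_eigenvalue_tail_le[OF K_par_ge_1[OF assms(1)]] sum_wiener_mse_le[OF assms(1)]
    by (simp add: \<sigma>_def K_def)
qed

lemma wiener_decoder_in_decoders: "wiener_decoder \<Delta> \<in> decoders \<Delta>"
  unfolding decoders_def mem_Collect_eq split_beta' wiener_decoder_def kl_phi_def by measurable

lemma nn_integral_sq_error_wiener_decoder:
  assumes "0 < \<Delta>" "0 \<le> u" "u \<le> 1"
  shows "(\<integral>\<^sup>+ t\<in>{0..1}. ennreal ((sawbridge u t - wiener_decoder \<Delta> (encoder \<Delta> u d) d t)^2) \<partial>lborel)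
    = ennreal (realized_distortion \<Delta> u d)"
proof -
  have "(\<integral>\<^sup>+ t\<in>{0..1}. ennreal ((sawbridge u t - wiener_decoder \<Delta> (encoder \<Delta> u d) d t)^2) \<partial>lborel)
      = (\<integral>\<^sup>+ t. ennreal (indicator {0..1} t * (sawbridge u t - wiener_decoder \<Delta> (encoder \<Delta> u d) d t)^2)
          \<partial>lborel)"
    by (intro nn_integral_cong) (auto split: split_indicator)
  also have "\<dots> = ennreal (realized_distortion \<Delta> u d)"
    using has_integral_sq_error_wiener_decoder[OF assms] by (intro nn_integral_has_integral_lebesgue) auto
  finally show ?thesis .
qed

lemma mse_wiener_decoder:
  assumes "0 < \<Delta>"
  shows "mse \<Delta> (wiener_decoder \<Delta>) = ennreal (\<integral>\<omega>. realized_distortion \<Delta> (fst \<omega>) (snd \<omega>) \<partial>saw_space \<Delta>)"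
proof -
  have "mse \<Delta> (wiener_decoder \<Delta>) = (\<integral>\<^sup>+ \<omega>. ennreal (realized_distortion \<Delta> (fst \<omega>) (snd \<omega>)) \<partial>saw_space \<Delta>)"
    unfolding mse_def
    by (rule nn_integral_cong_AE)
       (use AE_saw_space_source[of \<Delta>] in \<open>eventually_elim, simp add: nn_integral_sq_error_wiener_decoder[OF assms]\<close>)
  also have "\<dots> = ennreal (\<integral>\<omega>. realized_distortion \<Delta> (fst \<omega>) (snd \<omega>) \<partial>saw_space \<Delta>)"
  proof (rule nn_integral_eq_integral[OF integral_realized_distortion(1)[OF assms]])
    show "AE \<omega> in saw_space \<Delta>. 0 \<le> realized_distortion \<Delta> (fst \<omega>) (snd \<omega>)"
      using AE_saw_space_source[of \<Delta>]
      by eventually_elim (auto intro: has_integral_nonneg[OF has_integral_sq_error_wiener_decoder[OF assms]])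
  qed
  finally show ?thesis .
qed

theorem lemma1:
  fixes \<Delta> :: real
  assumes "0 < \<Delta>" and "\<Delta> < 1/6"
  shows "distortion \<Delta> \<le> ennreal \<Delta>"
proof -
  have "distortion \<Delta> \<le> mse \<Delta> (wiener_decoder \<Delta>)"
    unfolding distortion_def by (rule INF_lower[OF wiener_decoder_in_decoders])
  also have "\<dots> = ennreal (\<integral>\<omega>. realized_distortion \<Delta> (fst \<omega>) (snd \<omega>) \<partial>saw_space \<Delta>)"
    by (rule mse_wiener_decoder[OF assms(1)])
  also have "\<dots> \<le> ennreal \<Delta>"
    using integral_realized_distortion(2)[OF assms(1)] expected_realized_distortion_le[OF assms(1)]
    by (simp add: ennreal_leI)
  finally show ?thesis .
qed

end
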